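(* Fix a state $s$, let $\gamma\in(0,1)$, and let $F_j^{N,\infty}=\sum_{i\le j}p_i^{N,\infty}$ and $F_j^{N,k}=\sum_{i\le j}p_i^{N,k}$ be the cumulative weights of $\eta_{N,\infty}^s=\sum_ip_i^{N,\infty}\delta_{z_i}$ and $\eta_{N,k}^s=\sum_ip_i^{N,k}\delta_{z_i}$ (with $F_0=0$). Let $u\in(0,1)$ and suppose there is $j\in\{1,\dots,N\}$ with $F_{j-1}^{N,\infty}<u<F_j^{N,\infty}$; set $\epsilon_u:=\min\{F_j^{N,\infty}-u,\ u-F_{j-1}^{N,\infty}\}$. If $k\ge\kappa N$ with $$\kappa>\frac{\log\!\big(\frac{N\delta_0}{\epsilon_u^2(z_{\max}-z_{\min})}\big)}{N\log(1/\gamma)},$$ then $F_{j-1}^{N,k}<u<F_j^{N,k}$, i.e. $z_j$ is also the corresponding quantile of $\eta_{N,k}^s$.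
   Context: Finite MDP with deterministic costs, discount $\gamma$, fixed policy $\pi$. Grid $z_i=z_{\min}+(i-1)\frac{z_{\max}-z_{\min}}{N-1}$, $N\ge2$. Projection $\Pi_{\mathcal C}$ onto grid distributions: $\Pi_{\mathcal C}\delta_y=\delta_{z_1}$ if $y\le z_1$, $=\delta_{z_N}$ if $y>z_N$, $=\frac{z_{i+1}-y}{z_{i+1}-z_i}\delta_{z_i}+\frac{y-z_i}{z_{i+1}-z_i}\delta_{z_{i+1}}$ if $z_i<y\le z_{i+1}$, extended linearly. Projected Bellman operator $(\Pi_{\mathcal C}\mathcal T^\pi\eta)^{(s,a)}=\Pi_{\mathcal C}\big[\sum_{s'}P(s'\mid s,a)\sum_{a'}\pi(a'\mid s')(b_{C(s,a),\gamma})_\#\eta^{(s',a')}\big]$ with $b_{c,\gamma}(z)=c+\gamma z$; $\eta_{N,\infty}$ is its unique fixed point, $\eta_{N,k}=(\Pi_{\mathcal C}\mathcal T^\pi)^k\eta_{N,0}$ for an initial family $\eta_{N,0}$ of grid distributions, and state laws are mixtures $\eta^s=\sum_a\pi(a\mid s)\eta^{(s,a)}$. $\delta_0:=\sup_{(s,a)}l_2^2(\eta_{N,0}^{(s,a)},\eta_{N,\infty}^{(s,a)})$ with Cramér distance $l_2(\nu_1,\nu_2)=(\int(F_{\nu_1}-F_{\nu_2})^2dx)^{1/2}$. It is known that $\Pi_{\mathcal C}\mathcal T^\pi$ is a $\sqrt\gamma$-contraction in $\bar l_2(\eta,\nu)=\sup_{(s,a)}l_2(\eta^{(s,a)},\nu^{(s,a)})$.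 *)

theory Defs
  imports "HOL-Analysis.Analysis"
begin

text \<open>Grid distributions on z_1,...,z_N are represented by their weight vectors
  p :: nat => real (only indices 1..N are meaningful).\<close>

definition grid :: "real \<Rightarrow> real \<Rightarrow> nat \<Rightarrow> nat \<Rightarrow> real" where
  "grid zmin zmax N i = zmin + (real i - 1) * (zmax - zmin) / (real N - 1)"

definition is_gdist :: "nat \<Rightarrow> (nat \<Rightarrow> real) \<Rightarrow> bool" where
  "is_gdist N p \<longleftrightarrow> (\<forall>i\<in>{1..N}. 0 \<le> p i) \<and> (\<Sum>i=1..N. p i) = 1"

text \<open>Weight that the projection of the Dirac mass at y puts on the grid point z_i.\<close>
definition proj_w :: "(nat \<Rightarrow> real) \<Rightarrow> nat \<Rightarrow> real \<Rightarrow> nat \<Rightarrow> real" where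
  "proj_w z N y i =
     (if y \<le> z 1 then (if i = 1 then 1 else 0)
      else if y > z N then (if i = N then 1 else 0)
      else (\<Sum>l\<in>{1..<N}. if z l < y \<and> y \<le> z (Suc l) then
              (if i = l then (z (Suc l) - y) / (z (Suc l) - z l)
               else if i = Suc l then (y - z l) / (z (Suc l) - z l) else 0)
            else 0))"

text \<open>Projected distributional Bellman operator, acting on families of grid
  distributions indexed by state-action pairs. P s a s' = P(s'|s,a), pol s a = pi(a|s).\<close>
definition proj_bellman ::
  "(nat \<Rightarrow> real) \<Rightarrow> nat \<Rightarrow> ('s \<Rightarrow> 'a \<Rightarrow> real) \<Rightarrow> ('s \<Rightarrow> 'a \<Rightarrow> 's \<Rightarrow> real) \<Rightarrow>
   ('s \<Rightarrow> 'a \<Rightarrow> real) \<Rightarrow> real \<Rightarrow> ('s \<times> 'a \<Rightarrow> nat \<Rightarrow> real) \<Rightarrow> ('s::finite \<times> 'a::finite \<Rightarrow> nat \<Rightarrow> real)"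
  where
  "proj_bellman z N C P pol \<gamma> \<eta> = (\<lambda>(s, a) i.
     \<Sum>s'\<in>UNIV. P s a s' * (\<Sum>a'\<in>UNIV. pol s' a' *
        (\<Sum>l\<in>{1..N}. \<eta> (s', a') l * proj_w z N (C s a + \<gamma> * z l) i)))"

definition gcdf :: "(nat \<Rightarrow> real) \<Rightarrow> nat \<Rightarrow> (nat \<Rightarrow> real) \<Rightarrow> real \<Rightarrow> real" where
  "gcdf z N p x = (\<Sum>i\<in>{1..N}. if z i \<le> x then p i else 0)"

definition cramer_sq :: "(nat \<Rightarrow> real) \<Rightarrow> nat \<Rightarrow> (nat \<Rightarrow> real) \<Rightarrow> (nat \<Rightarrow> real) \<Rightarrow> real" where
  "cramer_sq z N p q = integral\<^sup>L lborel (\<lambda>x. (gcdf z N p x - gcdf z N q x)\<^sup>2)"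

definition state_law :: "('s \<Rightarrow> 'a \<Rightarrow> real) \<Rightarrow> ('s \<times> 'a::finite \<Rightarrow> nat \<Rightarrow> real) \<Rightarrow> 's \<Rightarrow> nat \<Rightarrow> real" where
  "state_law pol \<eta> s i = (\<Sum>a\<in>UNIV. pol s a * \<eta> (s, a) i)"

definition cum :: "(nat \<Rightarrow> real) \<Rightarrow> nat \<Rightarrow> real" where
  "cum p j = (\<Sum>i\<in>{1..j}. p i)"

end

theory Submission
  imports Defs
begin

text \<open>The error \<open>e\<^sub>k = \<eta>\<^sub>N\<^sub>,\<^sub>k - \<eta>\<^sub>N\<^sub>,\<^sub>\<infinity>\<close> is a family of signed grid measures of
  total mass zero, and for such a measure the squared Cramer distance is \<open>\<Delta>z\<close> times the
  sum of the squares of its cumulative weights at \<open>z\<^sub>1, \<dots>, z\<^sub>N\<^sub>-\<^sub>1\<close>. Summation by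
  parts writes the cumulative weights of \<open>\<Pi>\<^sub>\<C> (b\<^sub>c\<^sub>,\<^sub>\<gamma>)\<^sub>#e\<close> as a nonnegative
  matrix, with row sums at most 1 and column sums at most \<open>\<gamma>\<close>, applied to those of \<open>e\<close>;
  the Schur test and Jensen's inequality over transitions and actions then show that one
  Bellman step multiplies this energy by at most \<open>\<gamma>\<close>. Hence every cumulative weight of the
  state law of \<open>e\<^sub>k\<close> has square at most \<open>\<gamma>\<^sup>k \<delta>\<^sub>0 / \<Delta>z\<close>, which the choice of
  \<open>\<kappa>\<close> makes smaller than \<open>\<epsilon>\<^sub>u\<^sup>2\<close>; so \<open>F\<^sub>j\<^sub>-\<^sub>1\<close> and \<open>F\<^sub>j\<close> stay on the same
  side of \<open>u\<close>.\<close>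

lemma Cauchy_Schwarz_weighted_sum:
  fixes w g :: "'x \<Rightarrow> real"
  assumes "\<And>x. x \<in> A \<Longrightarrow> 0 \<le> w x"
  shows "(\<Sum>x\<in>A. w x * g x)\<^sup>2 \<le> (\<Sum>x\<in>A. w x) * (\<Sum>x\<in>A. w x * (g x)\<^sup>2)"
proof -
  have "(\<Sum>x\<in>A. w x * g x) = (\<Sum>x\<in>A. sqrt (w x) * (sqrt (w x) * g x))"
    by (rule sum.cong) (auto simp: assms real_sqrt_mult_self mult.assoc[symmetric])
  also have "(\<dots>)\<^sup>2 \<le> (\<Sum>x\<in>A. (sqrt (w x))\<^sup>2) * (\<Sum>x\<in>A. (sqrt (w x) * g x)\<^sup>2)"
    by (rule Cauchy_Schwarz_ineq_sum)
  also have "\<dots> = (\<Sum>x\<in>A. w x) * (\<Sum>x\<in>A. w x * (g x)\<^sup>2)"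
    using assms by (simp add: power_mult_distrib)
  finally show ?thesis .
qed

lemma convex_combination_square_le:
  fixes w g :: "'x \<Rightarrow> real"
  assumes "\<And>x. x \<in> A \<Longrightarrow> 0 \<le> w x" and "(\<Sum>x\<in>A. w x) = 1"
  shows "(\<Sum>x\<in>A. w x * g x)\<^sup>2 \<le> (\<Sum>x\<in>A. w x * (g x)\<^sup>2)"
  using Cauchy_Schwarz_weighted_sum[of A w g] assms by simp

lemma Schur_test_sum_square_le:
  fixes a :: "'i \<Rightarrow> 'l \<Rightarrow> real"
  assumes nonneg: "\<And>i l. i \<in> I \<Longrightarrow> l \<in> L \<Longrightarrow> 0 \<le> a i l"
    and rows: "\<And>i. i \<in> I \<Longrightarrow> (\<Sum>l\<in>L. a i l) \<le> 1"
    and cols: "\<And>l. l \<in> L \<Longrightarrow> (\<Sum>i\<in>I. a i l) \<le> \<gamma>"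
  shows "(\<Sum>i\<in>I. (\<Sum>l\<in>L. a i l * c l)\<^sup>2) \<le> \<gamma> * (\<Sum>l\<in>L. (c l)\<^sup>2)"
proof -
  have "(\<Sum>i\<in>I. (\<Sum>l\<in>L. a i l * c l)\<^sup>2) \<le> (\<Sum>i\<in>I. \<Sum>l\<in>L. a i l * (c l)\<^sup>2)"
  proof (rule sum_mono)
    fix i assume i: "i \<in> I"
    have "(\<Sum>l\<in>L. a i l * c l)\<^sup>2 \<le> (\<Sum>l\<in>L. a i l) * (\<Sum>l\<in>L. a i l * (c l)\<^sup>2)"
      using nonneg[OF i] by (rule Cauchy_Schwarz_weighted_sum)
    also have "\<dots> \<le> (\<Sum>l\<in>L. a i l * (c l)\<^sup>2)"
      using rows[OF i] nonneg[OF i] by (intro mult_left_le_one_le sum_nonneg) auto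
    finally show "(\<Sum>l\<in>L. a i l * c l)\<^sup>2 \<le> (\<Sum>l\<in>L. a i l * (c l)\<^sup>2)" .
  qed
  also have "\<dots> = (\<Sum>l\<in>L. (\<Sum>i\<in>I. a i l) * (c l)\<^sup>2)"
    by (subst sum.swap) (simp add: sum_distrib_right)
  also have "\<dots> \<le> (\<Sum>l\<in>L. \<gamma> * (c l)\<^sup>2)"
    using cols by (intro sum_mono mult_right_mono) auto
  finally show ?thesis by (simp add: sum_distrib_left)
qed

lemma power2_sum_disjoint_indicator:
  fixes c :: "'l \<Rightarrow> real"
  assumes "finite A" and "disjoint_family_on S A"
  shows "(\<Sum>l\<in>A. indicator (S l) x * c l)\<^sup>2 = (\<Sum>l\<in>A. indicator (S l) x * (c l)\<^sup>2)"
proof (cases "\<exists>l\<in>A. x \<in> S l")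
  case True
  then obtain l0 where l0: "l0 \<in> A" "x \<in> S l0" by blast
  have ind: "indicator (S l) x = (if l = l0 then 1 else 0 :: real)" if "l \<in> A" for l
    using assms(2) l0 that by (auto simp: disjoint_family_on_def indicator_def)
  have collapse: "(\<Sum>l\<in>A. indicator (S l) x * f l) = f l0" for f :: "'l \<Rightarrow> real"
  proof -
    have "(\<Sum>l\<in>A. indicator (S l) x * f l) = (\<Sum>l\<in>A. if l = l0 then f l else 0)"
      by (rule sum.cong) (simp_all add: ind)
    also have "\<dots> = f l0"
      using assms(1) l0 by simp
    finally show ?thesis .
  qed
  show ?thesis
    by (simp only: collapse)
next
  case False
  then show ?thesis by (simp add: indicator_def)
qed

lemma sum_mult_eq_cum_by_parts:
  "(\<Sum>l=1..n. e l * w l) = (\<Sum>l=1..n-1. cum e l * (w l - w (Suc l))) + cum e n * w n"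
proof (induction n)
  case 0
  then show ?case by (simp add: cum_def)
next
  case (Suc n)
  have "cum e (Suc n) = cum e n + e (Suc n)"
    by (simp add: cum_def)
  with Suc.IH show ?case
    by (cases n) (simp_all add: cum_def algebra_simps)
qed

lemma cum_cong: "(\<And>i. i \<in> {1..n} \<Longrightarrow> f i = g i) \<Longrightarrow> cum f n = cum g n"
  by (simp add: cum_def)

lemma cum_state_law: "cum (state_law pol \<eta> s) m = (\<Sum>a\<in>UNIV. pol s a * cum (\<eta> (s, a)) m)"
  unfolding cum_def state_law_def sum_distrib_left by (rule sum.swap)

lemma proj_bellman_diff:
  "proj_bellman z N C P pol \<gamma> f sa i - proj_bellman z N C P pol \<gamma> g sa i
     = proj_bellman z N C P pol \<gamma> (\<lambda>sa l. f sa l - g sa l) sa i"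
  by (cases sa) (simp add: proj_bellman_def left_diff_distrib right_diff_distrib sum_subtractf)

definition unit_clip :: "real \<Rightarrow> real" where
  "unit_clip x = max 0 (min 1 x)"

lemma sum_unit_clip_shift:
  "(\<Sum>i=1..n. unit_clip (real i - t)) = max 0 (min (real n) (real n - t))"
  by (induction n) (simp_all add: unit_clip_def)

lemma power_mult_less_one_of_ln_bound:
  fixes \<gamma> c \<kappa> n :: real
  assumes "0 < \<gamma>" "\<gamma> < 1" "0 < c" "0 < n"
    and \<kappa>: "ln c / (n * ln (1 / \<gamma>)) < \<kappa>" and k: "\<kappa> * n \<le> real k"
  shows "\<gamma> ^ k * c < 1"
proof -
  have lg: "0 < ln (1 / \<gamma>)" using assms by simp
  have "ln c < \<kappa> * n * ln (1 / \<gamma>)"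
    using \<kappa> lg \<open>0 < n\<close> by (simp add: field_simps)
  also have "\<dots> \<le> real k * ln (1 / \<gamma>)"
    using k lg by (simp add: mult_right_mono)
  finally have "ln (\<gamma> ^ k * c) < 0"
    using assms by (simp add: ln_mult ln_realpow ln_div)
  then show ?thesis
    using assms by (simp add: ln_less_zero_iff)
qed

locale uniform_grid =
  fixes zmin zmax :: real and N :: nat
  assumes N_ge_2: "2 \<le> N" and zmin_less_zmax: "zmin < zmax"
begin

abbreviation z :: "nat \<Rightarrow> real" where
  "z \<equiv> grid zmin zmax N"

definition dz :: real where
  "dz = (zmax - zmin) / (real N - 1)"

definition grid_pos :: "real \<Rightarrow> real" where
  "grid_pos y = (y - zmin) / dz"

lemma dz_pos: "0 < dz"
  using N_ge_2 zmin_less_zmax by (simp add: dz_def)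

lemma z_eq: "z m = zmin + (real m - 1) * dz"
  by (simp add: grid_def dz_def)

lemma z_Suc: "z (Suc m) = z m + dz"
  by (simp add: z_eq algebra_simps)

lemma z_le_z_iff: "z m \<le> z m' \<longleftrightarrow> m \<le> m'"
  using dz_pos by (simp add: z_eq)

lemma z_le_iff_grid_pos: "z m \<le> y \<longleftrightarrow> real m - 1 \<le> grid_pos y"
  using dz_pos by (simp add: z_eq grid_pos_def field_simps)

lemma z_less_iff_grid_pos: "z m < y \<longleftrightarrow> real m - 1 < grid_pos y"
  using dz_pos by (simp add: z_eq grid_pos_def field_simps)

lemma le_z_iff_grid_pos: "y \<le> z m \<longleftrightarrow> grid_pos y \<le> real m - 1"
  using dz_pos by (simp add: z_eq grid_pos_def field_simps)

lemma in_grid_cell_iff: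
  assumes "0 < grid_pos y"
  shows "z l < y \<and> y \<le> z (Suc l) \<longleftrightarrow> l = nat \<lceil>grid_pos y\<rceil>"
proof -
  have "z l < y \<and> y \<le> z (Suc l) \<longleftrightarrow> \<lceil>grid_pos y\<rceil> = int l"
    by (simp add: z_less_iff_grid_pos le_z_iff_grid_pos ceiling_eq_iff)
  also have "\<dots> \<longleftrightarrow> l = nat \<lceil>grid_pos y\<rceil>"
    using assms by linarith
  finally show ?thesis .
qed

lemma disjoint_grid_cells: "disjoint_family_on (\<lambda>l. {z l..<z (Suc l)}) A"
  unfolding disjoint_family_on_def
proof (intro ballI impI)
  fix l l' :: nat assume "l \<noteq> l'"
  then have "z (Suc l) \<le> z l' \<or> z (Suc l') \<le> z l"
    by (auto simp: z_le_z_iff)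
  then show "{z l..<z (Suc l)} \<inter> {z l'..<z (Suc l')} = {}"
    by auto
qed

text \<open>\<open>proj_cdf y m\<close> is the cumulative weight that the projection of the Dirac mass at \<open>y\<close>
  puts on \<open>z\<^sub>1, \<dots>, z\<^sub>m\<close>.\<close>
definition proj_cdf :: "real \<Rightarrow> nat \<Rightarrow> real" where
  "proj_cdf y m = (if m = 0 then 0 else if N \<le> m then 1 else unit_clip (real m - grid_pos y))"

lemma proj_cdf_below:
  assumes "y \<le> z 1"
  shows "proj_cdf y m = (if m = 0 then 0 else 1)"
proof -
  have "grid_pos y \<le> 0"
    using assms z_le_iff_grid_pos[of 1 y] z_less_iff_grid_pos[of 1 y] by auto
  then show ?thesis
    by (simp add: proj_cdf_def unit_clip_def)
qed

lemma proj_cdf_above: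
  assumes "z N < y"
  shows "proj_cdf y m = (if N \<le> m then 1 else 0)"
proof -
  have "real N - 1 < grid_pos y"
    using assms z_less_iff_grid_pos by blast
  then show ?thesis
    using N_ge_2 by (simp add: proj_cdf_def unit_clip_def)
qed

lemma proj_w_eq_proj_cdf_diff:
  assumes m: "m \<in> {1..N}"
  shows "proj_w z N y m = proj_cdf y m - proj_cdf y (m - 1)"
proof (cases "y \<le> z 1 \<or> z N < y")
  case True
  with m N_ge_2 show ?thesis
    by (auto simp: proj_w_def proj_cdf_below proj_cdf_above)
next
  case False
  define t where "t = grid_pos y"
  define l where "l = nat \<lceil>t\<rceil>"
  have t: "0 < t" "t \<le> real N - 1"
    using False z_less_iff_grid_pos[of 1 y] le_z_iff_grid_pos[of y N] by (auto simp: t_def)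
  have l: "1 \<le> l" "l < N" "real l - 1 < t" "t \<le> real l"
    using t N_ge_2 by (auto simp: l_def) linarith+
  have cell: "z l' < y \<and> y \<le> z (Suc l') \<longleftrightarrow> l' = l" for l'
    using in_grid_cell_iff t by (simp add: l_def t_def)
  have left: "(z (Suc l) - y) / (z (Suc l) - z l) = real l - t"
    and right: "(y - z l) / (z (Suc l) - z l) = t - (real l - 1)"
    using dz_pos by (simp_all add: z_Suc z_eq t_def grid_pos_def field_simps)
  have "proj_w z N y m = (\<Sum>l'\<in>{1..<N}. if l' = l then
          (if m = l then real l - t else if m = Suc l then t - (real l - 1) else 0) else 0)"
    using False unfolding proj_w_def
    by (simp add: cell left right cong: if_cong)
  also have "\<dots> = (if m = l then real l - t else if m = Suc l then t - (real l - 1) else 0)"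
    using l by simp
  also have "\<dots> = proj_cdf y m - proj_cdf y (m - 1)"
    using m l by (auto simp: proj_cdf_def unit_clip_def t_def)
  finally show ?thesis .
qed

lemma sum_proj_w_eq_proj_cdf: "i \<le> N \<Longrightarrow> (\<Sum>m=1..i. proj_w z N y m) = proj_cdf y i"
  by (induction i) (simp_all add: proj_cdf_def proj_w_eq_proj_cdf_diff)

definition cum_energy :: "(nat \<Rightarrow> real) \<Rightarrow> real" where
  "cum_energy e = (\<Sum>i=1..N-1. (cum e i)\<^sup>2)"

lemma cum_energy_nonneg: "0 \<le> cum_energy e"
  by (simp add: cum_energy_def sum_nonneg)

lemma cum_energy_cong: "(\<And>i. i \<in> {1..N} \<Longrightarrow> f i = g i) \<Longrightarrow> cum_energy f = cum_energy g"
  unfolding cum_energy_def by (intro sum.cong refl arg_cong[where f = power2] cum_cong) auto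

lemma cum_sq_le_cum_energy:
  assumes "cum e N = 0" and "m \<le> N"
  shows "(cum e m)\<^sup>2 \<le> cum_energy e"
proof (cases "m \<in> {1..N-1}")
  case True
  then show ?thesis
    unfolding cum_energy_def by (rule member_le_sum) auto
next
  case False
  with assms have "cum e m = 0"
    by (cases "m = N") (auto simp: cum_def)
  then show ?thesis
    by (simp add: cum_energy_nonneg)
qed

lemma gcdf_eq_sum_cells:
  assumes "cum e N = 0"
  shows "gcdf z N e x = (\<Sum>l=1..N-1. indicator {z l..<z (Suc l)} x * cum e l)"
proof -
  have "gcdf z N e x = (\<Sum>m=1..N. e m * of_bool (z m \<le> x))"
    unfolding gcdf_def by (intro sum.cong) auto
  also have "\<dots> = (\<Sum>l=1..N-1. cum e l * (of_bool (z l \<le> x) - of_bool (z (Suc l) \<le> x)))"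
    by (subst sum_mult_eq_cum_by_parts) (simp add: assms)
  also have "\<dots> = (\<Sum>l=1..N-1. indicator {z l..<z (Suc l)} x * cum e l)"
    using dz_pos by (intro sum.cong refl) (auto simp: indicator_def z_Suc)
  finally show ?thesis .
qed

lemma cramer_sq_eq_cum_energy:
  assumes "cum (\<lambda>i. p i - q i) N = 0"
  shows "cramer_sq z N p q = dz * cum_energy (\<lambda>i. p i - q i)"
proof -
  let ?e = "\<lambda>i. p i - q i"
  have "(gcdf z N p x - gcdf z N q x)\<^sup>2 = (\<Sum>l=1..N-1. indicator {z l..<z (Suc l)} x * (cum ?e l)\<^sup>2)"
    for x
  proof -
    have "gcdf z N p x - gcdf z N q x = gcdf z N ?e x"
      by (simp add: gcdf_def sum_subtractf[symmetric] if_distrib cong: if_cong)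
    then show ?thesis
      unfolding gcdf_eq_sum_cells[OF assms]
      by (simp only: power2_sum_disjoint_indicator[OF finite_atLeastAtMost disjoint_grid_cells])
  qed
  then have "cramer_sq z N p q
      = integral\<^sup>L lborel (\<lambda>x. \<Sum>l=1..N-1. indicator {z l..<z (Suc l)} x * (cum ?e l)\<^sup>2)"
    by (simp add: cramer_sq_def)
  also have "\<dots> = (\<Sum>l=1..N-1. measure lborel {z l..<z (Suc l)} * (cum ?e l)\<^sup>2)"
    using dz_pos
    by (intro has_bochner_integral_integral_eq has_bochner_integral_sum
        has_bochner_integral_mult_left has_bochner_integral_real_indicator)
      (auto simp: z_Suc emeasure_lborel_Ico)
  also have "\<dots> = dz * cum_energy ?e"
    using dz_pos by (simp add: cum_energy_def sum_distrib_left z_Suc)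
  finally show ?thesis .
qed

text \<open>\<open>proj_push_cum c \<gamma> e\<close> are the cumulative weights of \<open>\<Pi>\<^sub>\<C> (b\<^sub>c\<^sub>,\<^sub>\<gamma>)\<^sub>#e\<close> for a signed grid
  measure \<open>e\<close>.\<close>
definition proj_push_cum :: "real \<Rightarrow> real \<Rightarrow> (nat \<Rightarrow> real) \<Rightarrow> nat \<Rightarrow> real" where
  "proj_push_cum c \<gamma> e i = (\<Sum>l=1..N. e l * proj_cdf (c + \<gamma> * z l) i)"

lemma proj_push_cum_N: "proj_push_cum c \<gamma> e N = cum e N"
  by (simp add: proj_push_cum_def proj_cdf_def cum_def)

lemma sum_proj_push_cum_sq_le:
  assumes \<gamma>: "0 \<le> \<gamma>" "\<gamma> \<le> 1" and mass: "cum e N = 0"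
  shows "(\<Sum>i=1..N-1. (proj_push_cum c \<gamma> e i)\<^sup>2) \<le> \<gamma> * cum_energy e"
proof -
  define t where "t l = grid_pos (c + \<gamma> * z l)" for l
  define f where "f i l = unit_clip (real i - t l)" for i l
  define a where "a i l = f i l - f i (Suc l)" for i l
  have t_Suc: "t (Suc l) = t l + \<gamma>" for l
    using dz_pos by (simp add: t_def grid_pos_def z_Suc field_simps)
  have push: "proj_push_cum c \<gamma> e i = (\<Sum>l=1..N-1. a i l * cum e l)" if "i \<in> {1..N-1}" for i
  proof -
    have "proj_cdf (c + \<gamma> * z l) i = f i l" for l
      using that by (auto simp: proj_cdf_def f_def t_def)
    then have "proj_push_cum c \<gamma> e i = (\<Sum>l=1..N. e l * f i l)"
      by (simp add: proj_push_cum_def)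
    also have "\<dots> = (\<Sum>l=1..N-1. cum e l * a i l)"
      by (subst sum_mult_eq_cum_by_parts) (simp add: mass a_def)
    finally show ?thesis
      by (simp add: mult.commute)
  qed
  have "(\<Sum>i=1..N-1. (proj_push_cum c \<gamma> e i)\<^sup>2) = (\<Sum>i=1..N-1. (\<Sum>l=1..N-1. a i l * cum e l)\<^sup>2)"
    by (intro sum.cong refl) (simp add: push)
  also have "\<dots> \<le> \<gamma> * cum_energy e"
    unfolding cum_energy_def
  proof (rule Schur_test_sum_square_le)
    \<comment> \<open>Rows telescope; a column sum is the clipped mass lost by a shift of \<open>\<gamma>\<close> grid units.\<close>
    fix i l
    show "0 \<le> a i l"
      using \<gamma> by (simp add: a_def f_def t_Suc unit_clip_def)
    have "(\<Sum>l=1..N-1. a i l) = (\<Sum>l=1..N-1. (- f i (Suc l)) - (- f i l))"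
      by (simp add: a_def)
    also have "\<dots> = f i 1 - f i N"
      using N_ge_2 by (subst sum_Suc_diff) auto
    finally show "(\<Sum>l=1..N-1. a i l) \<le> 1"
      by (simp add: f_def unit_clip_def)
    have "(\<Sum>i=1..N-1. a i l)
        = (\<Sum>i=1..N-1. unit_clip (real i - t l)) - (\<Sum>i=1..N-1. unit_clip (real i - (t l + \<gamma>)))"
      by (simp add: a_def f_def t_Suc sum_subtractf)
    then show "(\<Sum>i=1..N-1. a i l) \<le> \<gamma>"
      using \<gamma> unfolding sum_unit_clip_shift by linarith
  qed
  finally show ?thesis .
qed

lemma power_mult_less_sq_of_kappa:
  assumes \<gamma>: "0 < \<gamma>" "\<gamma> < 1" and "0 \<le> \<delta>" "0 < \<epsilon>"
    and \<kappa>: "\<delta> = 0 \<or> ln (real N * \<delta> / (\<epsilon>\<^sup>2 * (zmax - zmin))) / (real N * ln (1 / \<gamma>)) < \<kappa>"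
    and k: "\<kappa> * real N \<le> real k"
  shows "\<gamma> ^ k * (\<delta> / dz) < \<epsilon>\<^sup>2"
proof (cases "\<delta> = 0")
  case True
  with \<open>0 < \<epsilon>\<close> show ?thesis by simp
next
  case False
  define c where "c = real N * \<delta> / (\<epsilon>\<^sup>2 * (zmax - zmin))"
  have "0 < c"
    using False \<open>0 \<le> \<delta>\<close> \<open>0 < \<epsilon>\<close> N_ge_2 zmin_less_zmax by (simp add: c_def)
  have "\<gamma> ^ k * c < 1"
    using \<gamma> \<open>0 < c\<close> N_ge_2 \<kappa> False k by (intro power_mult_less_one_of_ln_bound) (auto simp: c_def)
  have "\<delta> / dz = (real N - 1) * \<delta> / (zmax - zmin)"
    using N_ge_2 by (simp add: dz_def)
  also have "\<dots> \<le> real N * \<delta> / (zmax - zmin)"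
    using \<open>0 \<le> \<delta>\<close> zmin_less_zmax by (intro divide_right_mono mult_right_mono) auto
  also have "\<dots> = c * \<epsilon>\<^sup>2"
    using \<open>0 < \<epsilon>\<close> by (simp add: c_def)
  finally have "\<gamma> ^ k * (\<delta> / dz) \<le> \<gamma> ^ k * (c * \<epsilon>\<^sup>2)"
    using \<gamma> by (intro mult_left_mono) simp_all
  also have "\<dots> < \<epsilon>\<^sup>2"
    using mult_strict_right_mono[OF \<open>\<gamma> ^ k * c < 1\<close>, of "\<epsilon>\<^sup>2"] \<open>0 < \<epsilon>\<close> by (simp add: mult.assoc)
  finally show ?thesis .
qed

end

locale grid_mdp = uniform_grid +
  fixes P :: "'s::finite \<Rightarrow> 'a::finite \<Rightarrow> 's \<Rightarrow> real" and pol :: "'s \<Rightarrow> 'a \<Rightarrow> real"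
  assumes P_nonneg: "\<And>s a s'. 0 \<le> P s a s'" and P_sum: "\<And>s a. (\<Sum>s'\<in>UNIV. P s a s') = 1"
    and pol_nonneg: "\<And>s a. 0 \<le> pol s a" and pol_sum: "\<And>s. (\<Sum>a\<in>UNIV. pol s a) = 1"
begin

lemma cum_proj_bellman:
  assumes "i \<le> N"
  shows "cum (proj_bellman z N C P pol \<gamma> d (s, a)) i
    = (\<Sum>s'\<in>UNIV. P s a s' * (\<Sum>a'\<in>UNIV. pol s' a' * proj_push_cum (C s a) \<gamma> (d (s', a')) i))"
proof -
  have "cum (proj_bellman z N C P pol \<gamma> d (s, a)) i
      = (\<Sum>s'\<in>UNIV. P s a s' * (\<Sum>a'\<in>UNIV. pol s' a' *
          (\<Sum>l=1..N. d (s', a') l * (\<Sum>m=1..i. proj_w z N (C s a + \<gamma> * z l) m))))"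
    by (simp add: cum_def proj_bellman_def sum_distrib_left sum.swap[of _ "{Suc 0..i}"])
  then show ?thesis
    by (simp add: sum_proj_w_eq_proj_cdf[OF assms, simplified] proj_push_cum_def)
qed

lemma square_transition_average_le:
  "(\<Sum>s'\<in>UNIV. P s a s' * (\<Sum>a'\<in>UNIV. pol s' a' * x s' a'))\<^sup>2
     \<le> (\<Sum>s'\<in>UNIV. P s a s' * (\<Sum>a'\<in>UNIV. pol s' a' * (x s' a')\<^sup>2))"
proof -
  have "(\<Sum>s'\<in>UNIV. P s a s' * (\<Sum>a'\<in>UNIV. pol s' a' * x s' a'))\<^sup>2
      \<le> (\<Sum>s'\<in>UNIV. P s a s' * (\<Sum>a'\<in>UNIV. pol s' a' * x s' a')\<^sup>2)"
    by (rule convex_combination_square_le) (simp_all add: P_nonneg P_sum)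
  also have "\<dots> \<le> (\<Sum>s'\<in>UNIV. P s a s' * (\<Sum>a'\<in>UNIV. pol s' a' * (x s' a')\<^sup>2))"
    by (intro sum_mono mult_left_mono convex_combination_square_le)
      (simp_all add: P_nonneg pol_nonneg pol_sum)
  finally show ?thesis .
qed

lemma proj_bellman_contraction:
  assumes \<gamma>: "0 \<le> \<gamma>" "\<gamma> \<le> 1"
    and mass: "\<And>sa. cum (d sa) N = 0" and energy: "\<And>sa. cum_energy (d sa) \<le> M"
  shows "cum (proj_bellman z N C P pol \<gamma> d sa) N = 0
    \<and> cum_energy (proj_bellman z N C P pol \<gamma> d sa) \<le> \<gamma> * M"
proof -
  obtain s a where sa: "sa = (s, a)" by fastforce
  let ?Q = "\<lambda>s' a' i. proj_push_cum (C s a) \<gamma> (d (s', a')) i"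
  have mass_T: "cum (proj_bellman z N C P pol \<gamma> d sa) N = 0"
    using mass by (simp add: sa cum_proj_bellman proj_push_cum_N)
  have "cum_energy (proj_bellman z N C P pol \<gamma> d sa)
      = (\<Sum>i=1..N-1. (\<Sum>s'\<in>UNIV. P s a s' * (\<Sum>a'\<in>UNIV. pol s' a' * ?Q s' a' i))\<^sup>2)"
    unfolding cum_energy_def sa by (intro sum.cong refl arg_cong[where f = power2] cum_proj_bellman) auto
  also have "\<dots> \<le> (\<Sum>i=1..N-1. \<Sum>s'\<in>UNIV. P s a s' * (\<Sum>a'\<in>UNIV. pol s' a' * (?Q s' a' i)\<^sup>2))"
    by (intro sum_mono square_transition_average_le)
  also have "\<dots> = (\<Sum>s'\<in>UNIV. P s a s' * (\<Sum>a'\<in>UNIV. pol s' a' * (\<Sum>i=1..N-1. (?Q s' a' i)\<^sup>2)))"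
    by (simp add: sum_distrib_left sum.swap[of _ "{Suc 0..N - Suc 0}"])
  also have "\<dots> \<le> (\<Sum>s'\<in>UNIV. P s a s' * (\<Sum>a'\<in>UNIV. pol s' a' * (\<gamma> * M)))"
  proof (intro sum_mono mult_left_mono)
    fix s' a'
    have "(\<Sum>i=1..N-1. (?Q s' a' i)\<^sup>2) \<le> \<gamma> * cum_energy (d (s', a'))"
      by (rule sum_proj_push_cum_sq_le[OF \<gamma> mass])
    also have "\<dots> \<le> \<gamma> * M"
      using energy \<gamma> by (simp add: mult_left_mono)
    finally show "(\<Sum>i=1..N-1. (?Q s' a' i)\<^sup>2) \<le> \<gamma> * M" .
  qed (simp_all add: P_nonneg pol_nonneg)
  also have "\<dots> = \<gamma> * M"
    by (simp add: sum_distrib_right[symmetric] pol_sum P_sum)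
  finally show ?thesis
    using mass_T by simp
qed

lemma proj_bellman_iterate_error:
  assumes \<gamma>: "0 \<le> \<gamma>" "\<gamma> \<le> 1"
    and fixpoint: "\<And>sa i. i \<in> {1..N} \<Longrightarrow> proj_bellman z N C P pol \<gamma> \<eta>inf sa i = \<eta>inf sa i"
    and mass: "\<And>sa. cum (\<lambda>i. \<eta>0 sa i - \<eta>inf sa i) N = 0"
    and energy: "\<And>sa. cum_energy (\<lambda>i. \<eta>0 sa i - \<eta>inf sa i) \<le> M"
  shows "cum (\<lambda>i. (proj_bellman z N C P pol \<gamma> ^^ k) \<eta>0 sa i - \<eta>inf sa i) N = 0
    \<and> cum_energy (\<lambda>i. (proj_bellman z N C P pol \<gamma> ^^ k) \<eta>0 sa i - \<eta>inf sa i) \<le> \<gamma> ^ k * M"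
proof (induction k arbitrary: sa)
  case 0
  then show ?case using mass energy by simp
next
  case (Suc k)
  let ?T = "proj_bellman z N C P pol \<gamma>"
  define e where "e sa i = (?T ^^ k) \<eta>0 sa i - \<eta>inf sa i" for sa i
  have step: "(?T ^^ Suc k) \<eta>0 sa i - \<eta>inf sa i = ?T e sa i" if "i \<in> {1..N}" for i
    using fixpoint[OF that, of sa, symmetric] by (simp add: proj_bellman_diff e_def[abs_def])
  have "cum (?T e sa) N = 0 \<and> cum_energy (?T e sa) \<le> \<gamma> * (\<gamma> ^ k * M)"
    using Suc.IH by (intro proj_bellman_contraction \<gamma>) (simp_all add: e_def[abs_def])
  moreover have "cum (\<lambda>i. (?T ^^ Suc k) \<eta>0 sa i - \<eta>inf sa i) N = cum (?T e sa) N"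
    and "cum_energy (\<lambda>i. (?T ^^ Suc k) \<eta>0 sa i - \<eta>inf sa i) = cum_energy (?T e sa)"
    using step by (auto intro: cum_cong cum_energy_cong)
  ultimately show ?case
    by (simp add: mult.assoc)
qed

lemma cum_state_law_diff_sq_le:
  assumes "\<And>a. (cum (\<lambda>i. \<eta> (s, a) i - \<eta>' (s, a) i) m)\<^sup>2 \<le> B"
  shows "(cum (state_law pol \<eta> s) m - cum (state_law pol \<eta>' s) m)\<^sup>2 \<le> B"
proof -
  have "cum (state_law pol \<eta> s) m - cum (state_law pol \<eta>' s) m
      = (\<Sum>a\<in>UNIV. pol s a * cum (\<lambda>i. \<eta> (s, a) i - \<eta>' (s, a) i) m)"
    unfolding cum_state_law by (simp add: cum_def sum_subtractf right_diff_distrib)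
  also have "(\<dots>)\<^sup>2 \<le> (\<Sum>a\<in>UNIV. pol s a * (cum (\<lambda>i. \<eta> (s, a) i - \<eta>' (s, a) i) m)\<^sup>2)"
    by (rule convex_combination_square_le) (simp_all add: pol_nonneg pol_sum)
  also have "\<dots> \<le> (\<Sum>a\<in>UNIV. pol s a * B)"
    using assms by (intro sum_mono mult_left_mono) (simp_all add: pol_nonneg)
  finally show ?thesis
    by (simp add: sum_distrib_right[symmetric] pol_sum)
qed

lemma cum_state_law_iterate_sq_le:
  assumes \<gamma>: "0 \<le> \<gamma>" "\<gamma> \<le> 1"
    and fixpoint: "\<And>sa i. i \<in> {1..N} \<Longrightarrow> proj_bellman z N C P pol \<gamma> \<eta>inf sa i = \<eta>inf sa i"
    and mass: "\<And>sa. cum (\<lambda>i. \<eta>0 sa i - \<eta>inf sa i) N = 0"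
    and energy: "\<And>sa. cum_energy (\<lambda>i. \<eta>0 sa i - \<eta>inf sa i) \<le> M"
    and "m \<le> N"
  shows "(cum (state_law pol ((proj_bellman z N C P pol \<gamma> ^^ k) \<eta>0) s) m
      - cum (state_law pol \<eta>inf s) m)\<^sup>2 \<le> \<gamma> ^ k * M"
proof (rule cum_state_law_diff_sq_le)
  fix a
  from proj_bellman_iterate_error[OF \<gamma> fixpoint mass energy, of k "(s, a)"]
  show "(cum (\<lambda>i. (proj_bellman z N C P pol \<gamma> ^^ k) \<eta>0 (s, a) i - \<eta>inf (s, a) i) m)\<^sup>2
      \<le> \<gamma> ^ k * M"
    using cum_sq_le_cum_energy[OF _ \<open>m \<le> N\<close>] by (meson order_trans)
qed

end

theorem corollary2:
  fixes C :: "'s::finite \<Rightarrow> 'a::finite \<Rightarrow> real"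
    and P :: "'s \<Rightarrow> 'a \<Rightarrow> 's \<Rightarrow> real"
    and pol :: "'s \<Rightarrow> 'a \<Rightarrow> real"
    and \<gamma> zmin zmax u \<kappa> :: real
    and N k j :: nat
    and \<eta>0 \<eta>inf :: "'s \<times> 'a \<Rightarrow> nat \<Rightarrow> real"
    and s :: 's
  defines "z \<equiv> grid zmin zmax N"
  defines "T \<equiv> proj_bellman z N C P pol \<gamma>"
  defines "\<delta>0 \<equiv> (SUP sa. cramer_sq z N (\<eta>0 sa) (\<eta>inf sa))"
  defines "Finf \<equiv> cum (state_law pol \<eta>inf s)"
  defines "Fk \<equiv> cum (state_law pol ((T ^^ k) \<eta>0) s)"
  assumes N: "N \<ge> 2" and zrange: "zmin < zmax"
    and gamma: "0 < \<gamma>" "\<gamma> < 1"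
    and P_nonneg: "\<And>s a s'. P s a s' \<ge> 0" and P_sum: "\<And>s a. (\<Sum>s'\<in>UNIV. P s a s') = 1"
    and pol_nonneg: "\<And>s a. pol s a \<ge> 0" and pol_sum: "\<And>s. (\<Sum>a\<in>UNIV. pol s a) = 1"
    and init: "\<And>sa. is_gdist N (\<eta>0 sa)"
    and inf_gdist: "\<And>sa. is_gdist N (\<eta>inf sa)"
    and inf_fix: "\<And>sa i. i \<in> {1..N} \<Longrightarrow> T \<eta>inf sa i = \<eta>inf sa i"
    and u: "0 < u" "u < 1"
    and j: "j \<in> {1..N}" "Finf (j - 1) < u" "u < Finf j"
    and kappa: "\<delta>0 = 0 \<or> \<kappa> > ln (real N * \<delta>0 / ((min (Finf j - u) (u - Finf (j - 1)))\<^sup>2 * (zmax - zmin)))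
                                 / (real N * ln (1 / \<gamma>))"
    and k: "real k \<ge> \<kappa> * real N"
  shows "Fk (j - 1) < u \<and> u < Fk j"
proof -
  interpret grid_mdp zmin zmax N P pol
    using N zrange P_nonneg P_sum pol_nonneg pol_sum by unfold_locales
  define \<epsilon> where "\<epsilon> = min (Finf j - u) (u - Finf (j - 1))"
  have mass: "cum (\<lambda>i. \<eta>0 sa i - \<eta>inf sa i) N = 0" for sa
    using init[of sa] inf_gdist[of sa] by (simp add: cum_def is_gdist_def sum_subtractf)
  have energy: "cum_energy (\<lambda>i. \<eta>0 sa i - \<eta>inf sa i) \<le> \<delta>0 / dz" for sa
  proof -
    have "dz * cum_energy (\<lambda>i. \<eta>0 sa i - \<eta>inf sa i) = cramer_sq z N (\<eta>0 sa) (\<eta>inf sa)"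
      using cramer_sq_eq_cum_energy[OF mass] by (simp add: z_def)
    also have "\<dots> \<le> \<delta>0"
      unfolding \<delta>0_def by (rule cSUP_upper) simp_all
    finally show ?thesis
      using dz_pos by (simp add: pos_le_divide_eq mult.commute)
  qed
  have "0 < \<epsilon>"
    using j by (simp add: \<epsilon>_def)
  have "0 \<le> \<delta>0"
    using order_trans[OF cum_energy_nonneg energy] dz_pos by (simp add: zero_le_divide_iff)
  then have small: "\<gamma> ^ k * (\<delta>0 / dz) < \<epsilon>\<^sup>2"
    using gamma \<open>0 < \<epsilon>\<close> kappa k by (intro power_mult_less_sq_of_kappa) (simp_all add: \<epsilon>_def)
  have close: "\<bar>Fk m - Finf m\<bar> < \<epsilon>" if "m \<le> N" for m
  proof (rule power2_less_imp_less)
    have "(Fk m - Finf m)\<^sup>2 \<le> \<gamma> ^ k * (\<delta>0 / dz)"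
      unfolding Fk_def Finf_def T_def
      using cum_state_law_iterate_sq_le[OF _ _ inf_fix[unfolded T_def z_def] mass energy that,
          folded z_def] gamma by simp
    with small show "\<bar>Fk m - Finf m\<bar>\<^sup>2 < \<epsilon>\<^sup>2"
      by simp
  qed (use \<open>0 < \<epsilon>\<close> in simp)
  from close[of "j - 1"] close[of j] j(1) show ?thesis
    unfolding \<epsilon>_def abs_less_iff by auto
qed

end
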